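(* Let $P$ be a Poisson tensor on $\mathbb{R}^3$, let $H\in C^\infty(\mathbb{R}^3)$, let $S\in C^\infty(\mathbb{R}^3)$ satisfy $PdS=0$, and let $g$ be the symmetric tensor with components $g^{ij}=H^iH^j-\delta^{ij}\sum_k H^kH^k$. If $x$ is a regular point of $P$ (i.e. $P(x)\neq 0$) with $d_xS\neq 0$, then $x$ is an equilibrium point of the system $\dot{x}=PdH+gdS$ if and only if $x$ is an equilibrium of the gradient system $\dot{x}=gdS$.
   Context: $\mathbb{R}^3$ carries the standard Euclidean metric, used to identify tangent and cotangent spaces with $\mathbb{R}^3$; $H^i=H_i=\partial H/\partial x^i$. A Poisson tensor is a skew-symmetric bivector field satisfying the Jacobi identity. *)

theory Defs
  imports "HOL-Analysis.Analysis"
begin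

definition partial :: "3 \<Rightarrow> (real^3 \<Rightarrow> real) \<Rightarrow> real^3 \<Rightarrow> real" where
  "partial i f x = frechet_derivative f (at x) (axis i 1)"

fun iter_partial :: "3 list \<Rightarrow> (real^3 \<Rightarrow> real) \<Rightarrow> real^3 \<Rightarrow> real" where
  "iter_partial [] f = f"
| "iter_partial (i # is) f = partial i (iter_partial is f)"

definition smooth :: "(real^3 \<Rightarrow> real) \<Rightarrow> bool" where
  "smooth f \<longleftrightarrow> (\<forall>is x. iter_partial is f differentiable (at x))"

text \<open>Gradient (= differential dS under the Euclidean identification).\<close>
definition grad :: "(real^3 \<Rightarrow> real) \<Rightarrow> real^3 \<Rightarrow> real^3" where
  "grad f x = (\<chi> i. partial i f x)"

text \<open>Poisson tensor: smooth skew-symmetric bivector field satisfying the Jacobi identity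
  (P x $ i $ j is the component P^{ij} at x).\<close>
definition poisson_tensor :: "(real^3 \<Rightarrow> real^3^3) \<Rightarrow> bool" where
  "poisson_tensor P \<longleftrightarrow>
     (\<forall>i j. smooth (\<lambda>y. P y $ i $ j)) \<and>
     (\<forall>x i j. P x $ i $ j = - P x $ j $ i) \<and>
     (\<forall>x i j k.
        (\<Sum>l\<in>UNIV. P x $ i $ l * partial l (\<lambda>y. P y $ j $ k) x
                 + P x $ j $ l * partial l (\<lambda>y. P y $ k $ i) x
                 + P x $ k $ l * partial l (\<lambda>y. P y $ i $ j) x) = 0)"

definition gtensor :: "(real^3 \<Rightarrow> real) \<Rightarrow> real^3 \<Rightarrow> real^3^3" where
  "gtensor H x = (\<chi> i j. partial i H x * partial j H x
                   - (if i = j then 1 else 0) * (\<Sum>k\<in>UNIV. partial k H x * partial k H x))"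

end

theory Submission
  imports Defs
begin

(* Write h = grad H x and s = grad S x. Then g dS = (h . s) h - |h|^2 s, while P dH is orthogonal
   to h (skew-symmetry) and to s (skew-symmetry and P s = 0), hence to g dS. Two orthogonal vectors
   sum to zero only if both vanish, which gives one direction. Conversely, if g dS = 0 and s is
   nonzero, then h is a multiple of s, so P dH vanishes together with P dS. *)

lemma add_eq_0_iff_orthogonal:
  fixes a b :: "'a::real_inner"
  assumes "orthogonal a b"
  shows "a + b = 0 \<longleftrightarrow> a = 0 \<and> b = 0"
proof
  assume "a + b = 0"
  then have "b = - a"
    by (simp add: add_eq_0_iff)
  then have "a \<bullet> a = 0"
    using assms by (simp add: orthogonal_def)
  then show "a = 0 \<and> b = 0"
    using \<open>b = - a\<close> by simp
qed simp

lemma skew_matrix_inner: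
  fixes A :: "real^'n^'n"
  assumes "transpose A = - A"
  shows "(A *v v) \<bullet> u = - (v \<bullet> (A *v u))"
proof -
  have "(A *v v) \<bullet> u = v \<bullet> (transpose A *v u)"
    by (metis dot_lmul_matrix vector_transpose_matrix)
  also have "transpose A *v u = - (A *v u)"
    using assms by (simp add: matrix_vector_mult_def vec_eq_iff sum_negf)
  finally show ?thesis
    by simp
qed

lemma skew_matrix_inner_self:
  fixes A :: "real^'n^'n"
  assumes "transpose A = - A"
  shows "(A *v v) \<bullet> v = 0"
  using skew_matrix_inner[OF assms, of v v] by (simp add: inner_commute)

lemma inner_scaleR_eq_imp_multiple:
  fixes h s :: "'a::real_inner"
  assumes "(h \<bullet> s) *\<^sub>R h = (h \<bullet> h) *\<^sub>R s" and "s \<noteq> 0"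
  obtains c where "h = c *\<^sub>R s"
proof (cases "h \<bullet> s = 0")
  case True
  then have "h = 0"
    using assms by simp
  then show ?thesis
    using that[of 0] by simp
next
  case False
  have "h = inverse (h \<bullet> s) *\<^sub>R ((h \<bullet> s) *\<^sub>R h)"
    using False by simp
  also have "\<dots> = (inverse (h \<bullet> s) * (h \<bullet> h)) *\<^sub>R s"
    using assms(1) by simp
  finally show ?thesis
    by (rule that)
qed

lemma skew_matrix_add_eq_0_iff:
  fixes A :: "real^'n^'n"
  assumes "transpose A = - A" and "A *v s = 0" and "s \<noteq> 0"
  shows "A *v h + ((h \<bullet> s) *\<^sub>R h - (h \<bullet> h) *\<^sub>R s) = 0
    \<longleftrightarrow> (h \<bullet> s) *\<^sub>R h - (h \<bullet> h) *\<^sub>R s = 0"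
proof -
  define g where "g = (h \<bullet> s) *\<^sub>R h - (h \<bullet> h) *\<^sub>R s"
  have "orthogonal (A *v h) g"
    using skew_matrix_inner_self[OF assms(1), of h] skew_matrix_inner[OF assms(1), of h s] assms(2)
    by (simp add: g_def orthogonal_def inner_diff_right)
  then have "A *v h + g = 0 \<longleftrightarrow> A *v h = 0 \<and> g = 0"
    by (rule add_eq_0_iff_orthogonal)
  moreover have "A *v h = 0" if "g = 0"
  proof -
    obtain c where "h = c *\<^sub>R s"
      using inner_scaleR_eq_imp_multiple[of h s] \<open>g = 0\<close> assms(3) by (auto simp: g_def)
    then show ?thesis
      using assms(2) by (simp add: matrix_vector_mult_scaleR)
  qed
  ultimately show ?thesis
    unfolding g_def by blast
qed

lemma gtensor_mult_vector:
  "gtensor H x *v v = (grad H x \<bullet> v) *\<^sub>R grad H x - (grad H x \<bullet> grad H x) *\<^sub>R v"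
proof -
  let ?h = "grad H x" and ?c = "grad H x \<bullet> grad H x"
  have "(gtensor H x *v v) $ i = (\<Sum>j\<in>UNIV. ?h $ i * ?h $ j * v $ j)
      - (\<Sum>j\<in>UNIV. (if i = j then 1 else 0) * ?c * v $ j)" for i
    by (simp add: gtensor_def grad_def inner_vec_def matrix_vector_mult_def left_diff_distrib
        sum_subtractf)
  also have "\<dots> i = ?h $ i * (?h \<bullet> v) - ?c * v $ i" for i
  proof -
    have "(\<Sum>j\<in>UNIV. (if i = j then 1 else 0) * ?c * v $ j) = ?c * v $ i"
      by (simp add: if_distrib[of "\<lambda>a. a * _"] cong: if_cong)
    then show ?thesis
      by (simp add: inner_vec_def sum_distrib_left mult.assoc)
  qed
  finally show ?thesis
    by (simp add: vec_eq_iff mult.commute)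
qed

lemma poisson_tensor_skew:
  assumes "poisson_tensor P"
  shows "transpose (P x) = - P x"
proof -
  have "P x $ i $ j = - P x $ j $ i" for i j
    using assms unfolding poisson_tensor_def by blast
  then show ?thesis
    unfolding transpose_def vec_eq_iff by (metis vec_lambda_beta vector_uminus_component)
qed

theorem mainTheorem9:
  fixes P :: "real^3 \<Rightarrow> real^3^3" and H S :: "real^3 \<Rightarrow> real" and x :: "real^3"
  assumes "poisson_tensor P"
    and "smooth H" and "smooth S"
    and "\<forall>y. P y *v grad S y = 0"
    and "P x \<noteq> 0"
    and "grad S x \<noteq> 0"
  shows "(P x *v grad H x + gtensor H x *v grad S x = 0) \<longleftrightarrow> (gtensor H x *v grad S x = 0)"
proof -
  have "P x *v grad S x = 0"
    using assms(4) by blast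
  then show ?thesis
    unfolding gtensor_mult_vector
    by (rule skew_matrix_add_eq_0_iff[OF poisson_tensor_skew[OF assms(1)] _ assms(6)])
qed

end
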